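(* If the network $T$ is symmetric and the confirmation-bias network $T^*$ is strongly connected, then all agents have equal influence $s_i=1/n$ in $T$, and confirmation bias does not alter any agent's influence, i.e. $s^*_i=s_i=1/n$ for all $i$.
   Context: Agents $N=\{1,\dots,n\}$ communicate through a network $T$, an $n\times n$ row-stochastic matrix with entries $T_{ij}\in[0,1]$, assumed strongly connected and aperiodic. Each agent has an initial belief $x_{i0}\in[0,1]$. Confirmation bias of strength $q\in[0,1]$ (common to all agents) produces $T^*$: for $j\ne i$, if $|x_{i0}-x_{j0}|>1-q$ then $T^*_{ij}=0$ and $T_{ij}$ is added to the self-link $T^*_{ii}$; otherwise $T^*_{ij}=T_{ij}$. The influence vector $s$ of a network $P$ is the left eigenvector for eigenvalue $1$, normalized to sum to $1$: $s=sP$, i.e. $s_i=\sum_j P_{ji}s_j$; $s$ and $s^*$ denote the influence vectors of $T$ and $T^*$. *)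

theory Defs
  imports Complex_Main
begin

text \<open>Agents are N = {1..n}; an n x n matrix is a function nat => nat => real,
  only its entries with indices in {1..n} are relevant.\<close>

definition row_stochastic :: "nat \<Rightarrow> (nat \<Rightarrow> nat \<Rightarrow> real) \<Rightarrow> bool" where
  "row_stochastic n P \<longleftrightarrow>
     (\<forall>i\<in>{1..n}. \<forall>j\<in>{1..n}. 0 \<le> P i j \<and> P i j \<le> 1) \<and>
     (\<forall>i\<in>{1..n}. (\<Sum>j\<in>{1..n}. P i j) = 1)"

definition net_edges :: "nat \<Rightarrow> (nat \<Rightarrow> nat \<Rightarrow> real) \<Rightarrow> (nat \<times> nat) set" where
  "net_edges n P = {(i, j). i \<in> {1..n} \<and> j \<in> {1..n} \<and> P i j > 0}"

definition strongly_connected :: "nat \<Rightarrow> (nat \<Rightarrow> nat \<Rightarrow> real) \<Rightarrow> bool" where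
  "strongly_connected n P \<longleftrightarrow> (\<forall>i\<in>{1..n}. \<forall>j\<in>{1..n}. (i, j) \<in> (net_edges n P)\<^sup>+)"

definition aperiodic :: "nat \<Rightarrow> (nat \<Rightarrow> nat \<Rightarrow> real) \<Rightarrow> bool" where
  "aperiodic n P \<longleftrightarrow>
     (\<forall>i\<in>{1..n}. Gcd {k::nat. k \<ge> 1 \<and> (i, i) \<in> (net_edges n P) ^^ k} = 1)"

definition symmetric_net :: "nat \<Rightarrow> (nat \<Rightarrow> nat \<Rightarrow> real) \<Rightarrow> bool" where
  "symmetric_net n P \<longleftrightarrow> (\<forall>i\<in>{1..n}. \<forall>j\<in>{1..n}. P i j = P j i)"

definition conf_net :: "nat \<Rightarrow> (nat \<Rightarrow> nat \<Rightarrow> real) \<Rightarrow> (nat \<Rightarrow> real) \<Rightarrow> real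
    \<Rightarrow> nat \<Rightarrow> nat \<Rightarrow> real" where
  "conf_net n T x0 q i j =
     (if i = j then T i i + (\<Sum>k\<in>{k\<in>{1..n}. k \<noteq> i \<and> \<bar>x0 i - x0 k\<bar> > 1 - q}. T i k)
      else if \<bar>x0 i - x0 j\<bar> > 1 - q then 0 else T i j)"

definition influence_vector :: "nat \<Rightarrow> (nat \<Rightarrow> nat \<Rightarrow> real) \<Rightarrow> (nat \<Rightarrow> real) \<Rightarrow> bool" where
  "influence_vector n P s \<longleftrightarrow>
     (\<forall>i\<in>{1..n}. s i = (\<Sum>j\<in>{1..n}. P j i * s j)) \<and> (\<Sum>i\<in>{1..n}. s i) = 1"

end

theory Submission
  imports Defs
begin

text \<open>For a symmetric network the influence equation s = s P says that s is harmonic for P,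
  i.e. every s i is a P-weighted average of the s j. By the maximum principle a harmonic
  function is constant on a strongly connected network, so the only influence vector is the
  uniform one, which symmetry (columns sum to 1) makes an influence vector. Confirmation bias
  only moves weight from a symmetric pair of links onto the diagonal, so T* is again a
  symmetric stochastic matrix and the same argument applies to it.\<close>

lemma row_stochastic_iff_nonneg_row_sums:
  "row_stochastic n P \<longleftrightarrow>
     (\<forall>i\<in>{1..n}. \<forall>j\<in>{1..n}. 0 \<le> P i j) \<and> (\<forall>i\<in>{1..n}. (\<Sum>j\<in>{1..n}. P i j) = 1)"
proof -
  have "P i j \<le> 1"
    if "\<forall>k\<in>{1..n}. 0 \<le> P i k" "(\<Sum>k\<in>{1..n}. P i k) = 1" "j \<in> {1..n}" for i j
    using member_le_sum[of j "{1..n}" "P i"] that by simp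
  then show ?thesis
    unfolding row_stochastic_def by blast
qed

lemma harmonic_max_spreads_along_edge:
  fixes h :: "nat \<Rightarrow> real"
  assumes "row_stochastic n P"
    and harmonic: "\<forall>k\<in>{1..n}. h k = (\<Sum>l\<in>{1..n}. P k l * h l)"
    and max: "\<forall>k\<in>{1..n}. h k \<le> h i"
    and edge: "(i, j) \<in> net_edges n P"
  shows "h j = h i"
proof -
  have nonneg: "\<forall>k\<in>{1..n}. \<forall>l\<in>{1..n}. 0 \<le> P k l"
    and rows: "\<forall>k\<in>{1..n}. (\<Sum>l\<in>{1..n}. P k l) = 1"
    using assms(1) by (auto simp: row_stochastic_iff_nonneg_row_sums)
  from edge have i: "i \<in> {1..n}" and j: "j \<in> {1..n}" and pos: "P i j > 0"
    by (auto simp: net_edges_def)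
  have "(\<Sum>l\<in>{1..n}. P i l * (h i - h l)) = h i * (\<Sum>l\<in>{1..n}. P i l) - (\<Sum>l\<in>{1..n}. P i l * h l)"
    by (simp add: algebra_simps sum_subtractf sum_distrib_left)
  also have "\<dots> = 0"
    using rows harmonic i by simp
  finally have "(\<Sum>l\<in>{1..n}. P i l * (h i - h l)) = 0" .
  moreover have "\<forall>l\<in>{1..n}. 0 \<le> P i l * (h i - h l)"
    using nonneg max i by simp
  ultimately have "P i j * (h i - h j) = 0"
    using j by (subst (asm) sum_nonneg_eq_0_iff) auto
  then show ?thesis
    using pos by simp
qed

lemma harmonic_const_if_strongly_connected:
  fixes h :: "nat \<Rightarrow> real"
  assumes "row_stochastic n P"
    and "strongly_connected n P"
    and harmonic: "\<forall>k\<in>{1..n}. h k = (\<Sum>l\<in>{1..n}. P k l * h l)"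
    and i: "i \<in> {1..n}" and j: "j \<in> {1..n}"
  shows "h j = h i"
proof -
  obtain m where m: "m \<in> {1..n}" and max: "\<forall>k\<in>{1..n}. h k \<le> h m"
  proof -
    have "Max (h ` {1..n}) \<in> h ` {1..n}"
      using i by (intro Max_in) auto
    then obtain m where "m \<in> {1..n}" "h m = Max (h ` {1..n})"
      by auto
    then show ?thesis
      using that by auto
  qed
  have spread: "h b = h m" if "(a, b) \<in> net_edges n P" "h a = h m" for a b
    using harmonic_max_spreads_along_edge[OF assms(1) harmonic, of a b] max that by simp
  have "h b = h m" if "(m, b) \<in> (net_edges n P)\<^sup>+" for b
    using that by (induction rule: trancl_induct) (use spread in blast)+
  then have "\<forall>k\<in>{1..n}. h k = h m"
    using assms(2) m unfolding strongly_connected_def by blast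
  then show ?thesis
    using i j by simp
qed

lemma influence_vector_uniform_if_symmetric:
  assumes "n \<ge> 1" and "row_stochastic n P" and "symmetric_net n P"
  shows "influence_vector n P (\<lambda>_. 1 / real n)"
  unfolding influence_vector_def
proof (intro conjI ballI)
  fix i assume i: "i \<in> {1..n}"
  have "(\<Sum>j\<in>{1..n}. P j i * (1 / real n)) = (\<Sum>j\<in>{1..n}. P i j) * (1 / real n)"
    unfolding sum_distrib_right using assms(3) i by (intro sum.cong) (auto simp: symmetric_net_def)
  then show "1 / real n = (\<Sum>j\<in>{1..n}. P j i * (1 / real n))"
    using assms(2) i by (simp add: row_stochastic_def)
next
  show "(\<Sum>i\<in>{1..n}. 1 / real n) = 1"
    using assms(1) by simp
qed

lemma influence_vector_unique_if_symmetric: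
  assumes "row_stochastic n P" and "symmetric_net n P" and "strongly_connected n P"
    and s: "influence_vector n P s"
    and i: "i \<in> {1..n}"
  shows "s i = 1 / real n"
proof -
  have "\<forall>k\<in>{1..n}. s k = (\<Sum>l\<in>{1..n}. P k l * s l)"
    using s assms(2) unfolding influence_vector_def symmetric_net_def by auto
  then have const: "\<forall>k\<in>{1..n}. s k = s i"
    using harmonic_const_if_strongly_connected[OF assms(1,3)] i by blast
  have "1 = (\<Sum>k\<in>{1..n}. s k)"
    using s unfolding influence_vector_def by (elim conjE) (rule sym)
  also have "\<dots> = real n * s i"
    using const by simp
  finally show ?thesis
    using i by (auto simp: field_simps)
qed

lemma row_stochastic_conf_net:
  assumes "row_stochastic n T"
  shows "row_stochastic n (conf_net n T x0 q)"
  unfolding row_stochastic_iff_nonneg_row_sums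
proof (intro conjI ballI)
  fix i assume i: "i \<in> {1..n}"
  define B where "B = {k\<in>{1..n}. k \<noteq> i \<and> \<bar>x0 i - x0 k\<bar> > 1 - q}"
  have nonneg: "\<forall>j\<in>{1..n}. 0 \<le> T i j" and row: "(\<Sum>j\<in>{1..n}. T i j) = 1"
    using assms i by (auto simp: row_stochastic_iff_nonneg_row_sums)
  have B: "B \<subseteq> {1..n}" "i \<notin> B"
    by (auto simp: B_def)
  have C: "conf_net n T x0 q i j = (if j \<in> B then 0 else T i j) + (if j = i then sum (T i) B else 0)"
    if "j \<in> {1..n}" for j
    using that by (auto simp: conf_net_def B_def)
  have "0 \<le> sum (T i) B"
    using nonneg B(1) by (auto intro!: sum_nonneg)
  then show "0 \<le> conf_net n T x0 q i j" if "j \<in> {1..n}" for j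
    using C[OF that] nonneg that i by simp
  have "(\<Sum>j\<in>{1..n}. conf_net n T x0 q i j) = sum (T i) ({1..n} - B) + sum (T i) B"
    using C i by (simp add: sum.distrib sum.If_cases Diff_eq)
  also have "\<dots> = 1"
    using sum.subset_diff[OF B(1), of "T i"] row by simp
  finally show "(\<Sum>j\<in>{1..n}. conf_net n T x0 q i j) = 1" .
qed

lemma symmetric_net_conf_net:
  assumes "symmetric_net n T"
  shows "symmetric_net n (conf_net n T x0 q)"
  using assms by (auto simp: symmetric_net_def conf_net_def abs_minus_commute)

theorem mainTheorem2:
  fixes n :: nat and T :: "nat \<Rightarrow> nat \<Rightarrow> real" and x0 :: "nat \<Rightarrow> real" and q :: real
  assumes "n \<ge> 1"
    and "row_stochastic n T"
    and "strongly_connected n T"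
    and "aperiodic n T"
    and "\<forall>i\<in>{1..n}. 0 \<le> x0 i \<and> x0 i \<le> 1"
    and "0 \<le> q" and "q \<le> 1"
    and "symmetric_net n T"
    and "strongly_connected n (conf_net n T x0 q)"
  shows "influence_vector n T (\<lambda>_. 1 / real n)
       \<and> (\<forall>s. influence_vector n T s \<longrightarrow> (\<forall>i\<in>{1..n}. s i = 1 / real n))
       \<and> influence_vector n (conf_net n T x0 q) (\<lambda>_. 1 / real n)
       \<and> (\<forall>s. influence_vector n (conf_net n T x0 q) s \<longrightarrow> (\<forall>i\<in>{1..n}. s i = 1 / real n))"
proof -
  have "row_stochastic n (conf_net n T x0 q)" "symmetric_net n (conf_net n T x0 q)"
    using assms(2,8) by (simp_all add: row_stochastic_conf_net symmetric_net_conf_net)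
  then show ?thesis
    using assms(1-3,8,9) influence_vector_uniform_if_symmetric influence_vector_unique_if_symmetric
    by blast
qed

end
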